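(* Let $n\ge 2$, $b>0$, and let $p_0,\dots,p_{n-2}$ be complex-valued, $C^\infty$, $b$-periodic functions on $\mathbb{R}$; let $\mathcal{L}u := u^{(n)}+\sum_{k=0}^{n-2}p_k(x)u^{(k)}$. Fix $l\in\{0,1,\dots,2n-1\}$, let $S_l=\{\zeta\in\mathbb{C}: l\pi/n\le\arg\zeta\le(l+1)\pi/n\}$, fix $B\ge b$, and let $\omega_1,\dots,\omega_n$ be the $n$ distinct $n$-th roots of unity. Suppose that there are constants $Z,K>0$ such that for every $\zeta\in S_l$ with $|\zeta|>Z$, $y_1=y_1(x;\zeta),\dots,y_n=y_n(x;\zeta)$ are linearly independent solutions of $\mathcal{L}y=\zeta^n y$ satisfying $$\left|\frac{y_j^{(k-1)}(x;\zeta)}{\omega_j^{k-1}\zeta^{k-1}e^{\omega_j\zeta x}}-1\right|\le\frac{K}{|\zeta|},\qquad j,k=1,\dots,n,\ x\in[0,B].$$ Let $Y=[\gamma_{ij}]_{1\le i,j\le n}$ be the matrix of the shift $(\mathcal{T}f)(x)=f(x+b)$ with respect to the basis $y_1,\dots,y_n$, i.e. $y_j(x+b)=\sum_{i=1}^n\gamma_{ij}y_i(x)$. Then $$\gamma_{ij}=e^{\omega_j\zeta b}\left[\delta_{ij}+O(\zeta^{-1})\right]\qquad\text{as }\zeta\to\infty,\ \zeta\in S_l .$$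
   Context: Such solutions $y_j$ (called Naimark solutions) exist for $|\zeta|$ sufficiently large in each sector $S_l$. $\delta_{ij}$ is the Kronecker delta. *)

theory Defs
  imports "HOL-Analysis.Analysis"
begin

definition nth_vderiv :: "nat \<Rightarrow> (real \<Rightarrow> complex) \<Rightarrow> real \<Rightarrow> complex" where
  "nth_vderiv k f = ((\<lambda>g x. vector_derivative g (at x)) ^^ k) f"

definition smooth_fun :: "(real \<Rightarrow> complex) \<Rightarrow> bool" where
  "smooth_fun f \<longleftrightarrow>
     (\<forall>k x. (nth_vderiv k f has_vector_derivative nth_vderiv (Suc k) f x) (at x))"

definition periodic_fun :: "real \<Rightarrow> (real \<Rightarrow> complex) \<Rightarrow> bool" where
  "periodic_fun b f \<longleftrightarrow> (\<forall>x. f (x + b) = f x)"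

definition is_solution ::
  "nat \<Rightarrow> (nat \<Rightarrow> real \<Rightarrow> complex) \<Rightarrow> complex \<Rightarrow> (real \<Rightarrow> complex) \<Rightarrow> bool" where
  "is_solution n p \<zeta> f \<longleftrightarrow>
     (\<forall>k<n. \<forall>x. (nth_vderiv k f has_vector_derivative nth_vderiv (Suc k) f x) (at x)) \<and>
     (\<forall>x. nth_vderiv n f x + (\<Sum>k=0..n-2. p k x * nth_vderiv k f x) = \<zeta> ^ n * f x)"

definition sector :: "nat \<Rightarrow> nat \<Rightarrow> complex set" where
  "sector n l = {\<zeta>. \<exists>t. real l * pi / real n \<le> t \<and> t \<le> real (l + 1) * pi / real n \<and>
                        \<zeta> = complex_of_real (cmod \<zeta>) * exp (\<i> * complex_of_real t)}"

definition lin_indep_funs :: "nat \<Rightarrow> (nat \<Rightarrow> real \<Rightarrow> complex) \<Rightarrow> bool" where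
  "lin_indep_funs n y \<longleftrightarrow>
     (\<forall>c :: nat \<Rightarrow> complex. (\<forall>x. (\<Sum>j=1..n. c j * y j x) = 0) \<longrightarrow> (\<forall>j\<in>{1..n}. c j = 0))"

end

theory Submission
  imports Defs
begin

text \<open>
  Differentiating the shift relation \<open>y\<^sub>j(x + b) = \<Sum>\<^sub>i \<gamma>\<^sub>i\<^sub>j y\<^sub>i(x)\<close> \<open>k\<close> times and putting
  \<open>x = 0\<close> gives, for \<open>k = 0, \<dots>, n - 1\<close>, a linear system for the \<open>j\<close>-th column of \<open>Y\<close>. By the
  asymptotics at \<open>x = 0\<close> and \<open>x = b\<close>, after division by \<open>\<zeta>\<^sup>k e\<^bsup>\<omega>\<^sub>j\<zeta>b\<^esup>\<close> its matrix is the Vandermonde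
  matrix \<open>[\<omega>\<^sub>i\<^sup>k]\<close> of the roots of unity up to relative errors \<open>O(\<zeta>\<^sup>-\<^sup>1)\<close>, and its right-hand side is
  the \<open>j\<close>-th column of that matrix up to the same errors. The Vandermonde matrix of the \<open>n\<close>-th
  roots of unity is \<open>n\<close> times a unitary matrix (discrete Fourier inversion), so for large \<open>|\<zeta>|\<close>
  the perturbation can be absorbed and the column differs from \<open>e\<^bsup>\<omega>\<^sub>j\<zeta>b\<^esup>\<delta>\<^sub>i\<^sub>j\<close> by \<open>O(\<zeta>\<^sup>-\<^sup>1)\<close>
  relative to \<open>e\<^bsup>\<omega>\<^sub>j\<zeta>b\<^esup>\<close>. Only the differentiability of the \<open>y\<^sub>j\<close> enters: the differential
  equation itself, the coefficients \<open>p\<^sub>k\<close> and linear independence play no role.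
\<close>

lemma nth_vderiv_0 [simp]: "nth_vderiv 0 f = f"
  by (simp add: nth_vderiv_def)

lemma nth_vderiv_Suc: "nth_vderiv (Suc k) f x = vector_derivative (nth_vderiv k f) (at x)"
  by (simp add: nth_vderiv_def)

lemma nth_vderiv_shift:
  assumes "\<forall>k<N. \<forall>x. (nth_vderiv k f has_vector_derivative nth_vderiv (Suc k) f x) (at x)"
    and "m \<le> N"
  shows "nth_vderiv m (\<lambda>x. f (x + b)) = (\<lambda>x. nth_vderiv m f (x + b))"
  using assms(2)
proof (induction m)
  case (Suc m)
  show ?case
  proof
    fix x
    have "(nth_vderiv m f has_vector_derivative nth_vderiv (Suc m) f (x + b)) (at (x + b))"
      using assms(1) Suc.prems by auto
    then have "((nth_vderiv m f \<circ> (\<lambda>x. x + b)) has_vector_derivative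
               1 *\<^sub>R nth_vderiv (Suc m) f (x + b)) (at x)"
      by (intro vector_diff_chain_at)
         (auto intro!: derivative_eq_intros simp flip: has_real_derivative_iff_has_vector_derivative)
    then show "nth_vderiv (Suc m) (\<lambda>x. f (x + b)) x = nth_vderiv (Suc m) f (x + b)"
      using Suc by (simp add: nth_vderiv_Suc o_def vector_derivative_at)
  qed
qed simp

lemma nth_vderiv_sum:
  assumes "\<forall>i\<in>I. \<forall>k<N. \<forall>x. (nth_vderiv k (f i) has_vector_derivative nth_vderiv (Suc k) (f i) x) (at x)"
    and "m \<le> N"
  shows "nth_vderiv m (\<lambda>x. \<Sum>i\<in>I. c i * f i x) = (\<lambda>x. \<Sum>i\<in>I. c i * nth_vderiv m (f i) x)"
  using assms(2)
proof (induction m)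
  case (Suc m)
  show ?case
  proof
    fix x
    have "((\<lambda>x. \<Sum>i\<in>I. c i * nth_vderiv m (f i) x) has_vector_derivative
           (\<Sum>i\<in>I. c i * nth_vderiv (Suc m) (f i) x)) (at x)"
      using assms(1) Suc.prems
      by (intro has_vector_derivative_sum has_vector_derivative_mult_right) auto
    then show "nth_vderiv (Suc m) (\<lambda>x. \<Sum>i\<in>I. c i * f i x) x
             = (\<Sum>i\<in>I. c i * nth_vderiv (Suc m) (f i) x)"
      using Suc by (simp add: nth_vderiv_Suc vector_derivative_at)
  qed
qed simp

lemma nth_vderiv_shift_eq_sum:
  assumes f: "\<forall>k<N. \<forall>x. (nth_vderiv k f has_vector_derivative nth_vderiv (Suc k) f x) (at x)"
    and g: "\<forall>i\<in>I. \<forall>k<N. \<forall>x. (nth_vderiv k (g i) has_vector_derivative nth_vderiv (Suc k) (g i) x) (at x)"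
    and shift: "\<forall>x. f (x + b) = (\<Sum>i\<in>I. c i * g i x)"
    and "m \<le> N"
  shows "nth_vderiv m f (x + b) = (\<Sum>i\<in>I. c i * nth_vderiv m (g i) x)"
proof -
  have "(\<lambda>x. nth_vderiv m f (x + b)) = nth_vderiv m (\<lambda>x. f (x + b))"
    using nth_vderiv_shift[OF f \<open>m \<le> N\<close>] by simp
  also have "\<dots> = (\<lambda>x. \<Sum>i\<in>I. c i * nth_vderiv m (g i) x)"
    using shift nth_vderiv_sum[OF g \<open>m \<le> N\<close>] by simp
  finally show ?thesis by (rule fun_cong)
qed

lemma norm_root_of_unity:
  fixes w :: complex
  assumes "w ^ n = 1" "n > 0"
  shows "cmod w = 1"
  using assms power_eq_iff_eq_base[of n "cmod w" 1] by (simp flip: norm_power)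

lemma roots_of_unity_orthogonal:
  fixes \<omega> \<eta> :: complex
  assumes \<omega>: "\<omega> ^ n = 1" and \<eta>: "\<eta> ^ n = 1" and "n > 0"
  shows "(\<Sum>k<n. (cnj \<eta> * \<omega>) ^ k) = (if \<omega> = \<eta> then of_nat n else 0)"
proof -
  have "cnj \<eta> * \<eta> = 1"
    using norm_root_of_unity[OF \<eta> \<open>n > 0\<close>] complex_norm_square[of \<eta>] by (simp add: mult.commute)
  moreover have "(cnj \<eta> * \<omega>) ^ n = 1"
    using \<omega> \<eta> by (simp add: power_mult_distrib flip: complex_cnj_power)
  moreover have "cnj \<eta> * \<omega> = 1 \<Longrightarrow> \<omega> = \<eta>"
    using \<open>cnj \<eta> * \<eta> = 1\<close> by (metis mult.left_commute mult.right_neutral)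
  ultimately show ?thesis
    by (auto simp: sum_gp_strict)
qed

lemma roots_of_unity_fourier_inversion:
  fixes \<omega> :: "nat \<Rightarrow> complex"
  assumes roots: "\<forall>i\<in>{1..n}. \<omega> i ^ n = 1" and inj: "inj_on \<omega> {1..n}" and m: "m \<in> {1..n}"
  shows "(\<Sum>k<n. cnj (\<omega> m) ^ k * (\<Sum>i=1..n. \<omega> i ^ k * u i)) = of_nat n * u m"
proof -
  have "(\<Sum>k<n. cnj (\<omega> m) ^ k * (\<Sum>i=1..n. \<omega> i ^ k * u i))
      = (\<Sum>i=1..n. u i * (\<Sum>k<n. (cnj (\<omega> m) * \<omega> i) ^ k))"
    by (simp add: sum_distrib_left sum_distrib_right power_mult_distrib ac_simps sum.swap[of _ "{..<n}"])
  also have "\<dots> = (\<Sum>i=1..n. if i = m then u m * of_nat n else 0)"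
    using roots inj m by (intro sum.cong refl) (auto simp: roots_of_unity_orthogonal inj_on_eq_iff)
  also have "\<dots> = of_nat n * u m"
    using m by (simp add: mult.commute)
  finally show ?thesis .
qed

lemma roots_of_unity_fourier_bound:
  fixes \<omega> :: "nat \<Rightarrow> complex"
  assumes roots: "\<forall>i\<in>{1..n}. \<omega> i ^ n = 1" and inj: "inj_on \<omega> {1..n}" and m: "m \<in> {1..n}"
  shows "real n * cmod (u m) \<le> (\<Sum>k<n. cmod (\<Sum>i=1..n. \<omega> i ^ k * u i))"
proof -
  have "cmod (\<omega> m) = 1"
    using roots m norm_root_of_unity by fastforce
  have "real n * cmod (u m) = cmod (of_nat n * u m)"
    by (simp add: norm_mult)
  also have "\<dots> = cmod (\<Sum>k<n. cnj (\<omega> m) ^ k * (\<Sum>i=1..n. \<omega> i ^ k * u i))"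
    by (simp only: roots_of_unity_fourier_inversion[OF roots inj m])
  also have "\<dots> \<le> (\<Sum>k<n. cmod (cnj (\<omega> m) ^ k * (\<Sum>i=1..n. \<omega> i ^ k * u i)))"
    by (rule norm_sum)
  also have "\<dots> = (\<Sum>k<n. cmod (\<Sum>i=1..n. \<omega> i ^ k * u i))"
    by (simp add: norm_mult norm_power \<open>cmod (\<omega> m) = 1\<close>)
  finally show ?thesis .
qed

lemma scaled_shift_system:
  fixes y :: "nat \<Rightarrow> real \<Rightarrow> complex" and \<omega> g :: "nat \<Rightarrow> complex"
  assumes derivs: "\<forall>i\<in>{1..n}. \<forall>k<n. \<forall>x.
      (nth_vderiv k (y i) has_vector_derivative nth_vderiv (Suc k) (y i) x) (at x)"
    and shift: "\<forall>x. y j (x + b) = (\<Sum>i=1..n. g i * y i x)" and j: "j \<in> {1..n}"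
    and \<omega>: "\<forall>i\<in>{1..n}. \<omega> i \<noteq> 0" and "E \<noteq> 0" and "k < n"
  shows "E * \<omega> j ^ k * (nth_vderiv k (y j) b / (\<omega> j ^ k * \<zeta> ^ k * E))
       = (\<Sum>i=1..n. g i * \<omega> i ^ k * (nth_vderiv k (y i) 0 / (\<omega> i ^ k * \<zeta> ^ k)))"
proof -
  have "E * \<omega> j ^ k * (nth_vderiv k (y j) b / (\<omega> j ^ k * \<zeta> ^ k * E))
      = nth_vderiv k (y j) (0 + b) / \<zeta> ^ k"
    using \<omega> j \<open>E \<noteq> 0\<close> by simp
  also have "\<dots> = (\<Sum>i=1..n. g i * nth_vderiv k (y i) 0) / \<zeta> ^ k"
    using derivs j shift \<open>k < n\<close> by (subst nth_vderiv_shift_eq_sum[where N = n]) auto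
  also have "\<dots> = (\<Sum>i=1..n. g i * \<omega> i ^ k * (nth_vderiv k (y i) 0 / (\<omega> i ^ k * \<zeta> ^ k)))"
    using \<omega> by (simp add: sum_divide_distrib)
  finally show ?thesis .
qed

text \<open>
  The system in the proof idea: \<open>A k i\<close> and \<open>D k\<close> are the factors, close to \<open>1\<close>, by which the
  matrix entries and the right-hand side deviate from \<open>\<omega>\<^sub>i\<^sup>k\<close> and \<open>E \<omega>\<^sub>j\<^sup>k\<close>.
\<close>

lemma perturbed_roots_of_unity_system:
  fixes \<omega> :: "nat \<Rightarrow> complex" and A :: "nat \<Rightarrow> nat \<Rightarrow> complex"
  assumes roots: "\<forall>i\<in>{1..n}. \<omega> i ^ n = 1" and inj: "inj_on \<omega> {1..n}" and j: "j \<in> {1..n}"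
    and E: "E \<noteq> 0" and t: "real n * t \<le> 1 / 2"
    and A: "\<And>k i. k < n \<Longrightarrow> i \<in> {1..n} \<Longrightarrow> cmod (A k i - 1) \<le> t"
    and D: "\<And>k. k < n \<Longrightarrow> cmod (D k - 1) \<le> t"
    and system: "\<And>k. k < n \<Longrightarrow> E * \<omega> j ^ k * D k = (\<Sum>i=1..n. g i * \<omega> i ^ k * A k i)"
    and i: "i \<in> {1..n}"
  shows "cmod (g i - E * (if i = j then 1 else 0)) \<le> cmod E * (4 * real n * t)"
proof -
  have norm_\<omega>: "cmod (\<omega> i) = 1" if "i \<in> {1..n}" for i
    using roots that norm_root_of_unity by fastforce
  define c where "c i = g i / E - (if i = j then 1 else 0)" for i
  define S where "S = (\<Sum>i=1..n. cmod (c i))"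
  have moment: "(\<Sum>i=1..n. \<omega> i ^ k * c i)
      = \<omega> j ^ k * (D k - A k j) - (\<Sum>i=1..n. c i * \<omega> i ^ k * (A k i - 1))" if "k < n" for k
  proof -
    have "\<omega> j ^ k * D k = (\<Sum>i=1..n. g i * \<omega> i ^ k * A k i) / E"
      using system[OF that] E by (simp add: field_simps)
    also have "\<dots> = (\<Sum>i=1..n. (c i + (if i = j then 1 else 0)) * \<omega> i ^ k * A k i)"
      by (simp add: c_def sum_divide_distrib)
    also have "\<dots> = (\<Sum>i=1..n. c i * \<omega> i ^ k * A k i) + \<omega> j ^ k * A k j"
      using j by (simp add: distrib_right sum.distrib if_distrib[of "\<lambda>x. x * _"] cong: if_cong)
    finally show ?thesis
      by (simp add: algebra_simps sum_subtractf)
  qed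
  have moment_bound: "cmod (\<Sum>i=1..n. \<omega> i ^ k * c i) \<le> 2 * t + t * S" if "k < n" for k
  proof -
    have "cmod (D k - A k j) \<le> 2 * t"
      using norm_triangle_ineq4[of "D k - 1" "A k j - 1"] D[OF that] A[OF that j] by simp
    then have leading: "cmod (\<omega> j ^ k * (D k - A k j)) \<le> 2 * t"
      by (simp add: norm_mult norm_power norm_\<omega>[OF j])
    have remainder: "cmod (\<Sum>i=1..n. c i * \<omega> i ^ k * (A k i - 1)) \<le> (\<Sum>i=1..n. cmod (c i) * t)"
      using A[OF that] norm_\<omega>
      by (intro order_trans[OF norm_sum] sum_mono) (simp add: norm_mult norm_power mult_left_mono)
    have "cmod (\<Sum>i=1..n. \<omega> i ^ k * c i)
        \<le> cmod (\<omega> j ^ k * (D k - A k j)) + cmod (\<Sum>i=1..n. c i * \<omega> i ^ k * (A k i - 1))"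
      unfolding moment[OF that] by (rule norm_triangle_ineq4)
    also have "\<dots> \<le> 2 * t + (\<Sum>i=1..n. cmod (c i) * t)"
      using leading remainder by (rule add_mono)
    finally show ?thesis
      by (simp add: S_def sum_distrib_left mult.commute)
  qed
  have c_bound: "cmod (c m) \<le> 2 * t + t * S" if "m \<in> {1..n}" for m
  proof -
    have "real n * cmod (c m) \<le> (\<Sum>k<n. cmod (\<Sum>i=1..n. \<omega> i ^ k * c i))"
      by (rule roots_of_unity_fourier_bound[OF roots inj that])
    also have "\<dots> \<le> real n * (2 * t + t * S)"
      using sum_mono[OF moment_bound, of "{..<n}"] by simp
    finally show ?thesis
      using that by (simp add: mult_le_cancel_left_pos)
  qed
  have "(\<Sum>m=1..n. cmod (c m)) \<le> (\<Sum>m=1..n. 2 * t + t * S)"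
    by (rule sum_mono) (rule c_bound)
  then have "S \<le> 2 * (real n * t) + (real n * t) * S"
    by (simp add: S_def algebra_simps)
  moreover have "(real n * t) * S \<le> S / 2"
    using mult_right_mono[OF t, of S] by (simp add: S_def sum_nonneg)
  moreover have "cmod (c i) \<le> S"
    unfolding S_def using i by (intro member_le_sum) auto
  ultimately have "cmod (c i) \<le> 4 * real n * t"
    by linarith
  moreover have "g i - E * (if i = j then 1 else 0) = E * c i"
    using E by (simp add: c_def algebra_simps)
  ultimately show ?thesis
    by (simp add: norm_mult mult_left_mono)
qed

theorem theorem1:
  fixes n l :: nat and b B Z K :: real
    and p :: "nat \<Rightarrow> real \<Rightarrow> complex"
    and \<omega> :: "nat \<Rightarrow> complex"
    and y :: "nat \<Rightarrow> complex \<Rightarrow> real \<Rightarrow> complex"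
    and \<gamma> :: "complex \<Rightarrow> nat \<Rightarrow> nat \<Rightarrow> complex"
  assumes n: "n \<ge> 2" and b: "b > 0"
    and p_smooth: "\<forall>k\<le>n-2. smooth_fun (p k)"
    and p_periodic: "\<forall>k\<le>n-2. periodic_fun b (p k)"
    and l: "l \<le> 2 * n - 1"
    and B: "B \<ge> b"
    and \<omega>_roots: "\<forall>j\<in>{1..n}. \<omega> j ^ n = 1"
    and \<omega>_distinct: "inj_on \<omega> {1..n}"
    and ZK: "Z > 0" "K > 0"
    and sol: "\<forall>\<zeta>\<in>sector n l. cmod \<zeta> > Z \<longrightarrow> (\<forall>j\<in>{1..n}. is_solution n p \<zeta> (y j \<zeta>))"
    and indep: "\<forall>\<zeta>\<in>sector n l. cmod \<zeta> > Z \<longrightarrow> lin_indep_funs n (\<lambda>j. y j \<zeta>)"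
    and asym: "\<forall>\<zeta>\<in>sector n l. cmod \<zeta> > Z \<longrightarrow>
       (\<forall>j\<in>{1..n}. \<forall>k\<in>{1..n}. \<forall>x\<in>{0..B}.
          cmod (nth_vderiv (k - 1) (y j \<zeta>) x /
                (\<omega> j ^ (k - 1) * \<zeta> ^ (k - 1) * exp (\<omega> j * \<zeta> * complex_of_real x)) - 1)
          \<le> K / cmod \<zeta>)"
    and shift: "\<forall>\<zeta>\<in>sector n l. cmod \<zeta> > Z \<longrightarrow>
       (\<forall>j\<in>{1..n}. \<forall>x. y j \<zeta> (x + b) = (\<Sum>i=1..n. \<gamma> \<zeta> i j * y i \<zeta> x))"
  shows "\<exists>C R. \<forall>\<zeta>\<in>sector n l. cmod \<zeta> > R \<longrightarrow>
           (\<forall>i\<in>{1..n}. \<forall>j\<in>{1..n}.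
              cmod (\<gamma> \<zeta> i j - exp (\<omega> j * \<zeta> * complex_of_real b) * (if i = j then 1 else 0))
              \<le> cmod (exp (\<omega> j * \<zeta> * complex_of_real b)) * (C / cmod \<zeta>))"
proof (intro exI ballI impI)
  fix \<zeta> i j
  assume \<zeta>: "\<zeta> \<in> sector n l" "cmod \<zeta> > max Z (2 * real n * K)" and ij: "i \<in> {1..n}" "j \<in> {1..n}"
  have "\<zeta> \<noteq> 0" "cmod \<zeta> > Z"
    using \<zeta> ZK by auto
  have \<omega>_nonzero: "\<omega> i \<noteq> 0" if "i \<in> {1..n}" for i
    using \<omega>_roots that n by (metis power_0_left zero_neq_one not_numeral_le_zero)
  define E where "E = exp (\<omega> j * \<zeta> * complex_of_real b)"
  define A where "A k i = nth_vderiv k (y i \<zeta>) 0 / (\<omega> i ^ k * \<zeta> ^ k)" for k i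
  define D where "D k = nth_vderiv k (y j \<zeta>) b / (\<omega> j ^ k * \<zeta> ^ k * E)" for k
  have asym\<zeta>: "cmod (nth_vderiv k (y i \<zeta>) x
      / (\<omega> i ^ k * \<zeta> ^ k * exp (\<omega> i * \<zeta> * complex_of_real x)) - 1) \<le> K / cmod \<zeta>"
    if "k < n" "i \<in> {1..n}" "x \<in> {0..B}" for k i x
  proof -
    have "Suc k \<in> {1..n}"
      using that by simp
    then show ?thesis
      using asym \<zeta>(1) \<open>cmod \<zeta> > Z\<close> that(2,3) by (metis diff_Suc_1)
  qed
  have A: "cmod (A k i - 1) \<le> K / cmod \<zeta>" if "k < n" "i \<in> {1..n}" for k i
    using asym\<zeta>[OF that, of 0] B b by (simp add: A_def)
  have D: "cmod (D k - 1) \<le> K / cmod \<zeta>" if "k < n" for k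
    using asym\<zeta>[OF that ij(2), of b] B b by (simp add: D_def E_def)
  have "E \<noteq> 0"
    by (simp add: E_def)
  have system: "E * \<omega> j ^ k * D k = (\<Sum>i=1..n. \<gamma> \<zeta> i j * \<omega> i ^ k * A k i)" if "k < n" for k
    unfolding A_def D_def using sol shift \<zeta>(1) \<open>cmod \<zeta> > Z\<close> ij(2) \<omega>_nonzero \<open>E \<noteq> 0\<close> that
    by (intro scaled_shift_system) (auto simp: is_solution_def)
  have "2 * real n * K < cmod \<zeta>"
    using \<zeta>(2) by simp
  then have small: "real n * (K / cmod \<zeta>) \<le> 1 / 2"
    using \<open>\<zeta> \<noteq> 0\<close> by (simp add: field_simps)
  from perturbed_roots_of_unity_system[OF \<omega>_roots \<omega>_distinct ij(2) \<open>E \<noteq> 0\<close> small A D system ij(1)]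
  show "cmod (\<gamma> \<zeta> i j - exp (\<omega> j * \<zeta> * complex_of_real b) * (if i = j then 1 else 0))
        \<le> cmod (exp (\<omega> j * \<zeta> * complex_of_real b)) * (4 * real n * K / cmod \<zeta>)"
    by (simp add: E_def)
qed

end
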